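(* Let $\varphi:\mathfrak{h}\to V^*$ be a real or complex factorization structure of dimension $m$ and $j\in\{1,\ldots,m\}$, and let $U=\{\ell\in\mathbb{P}(V_j):\dim(\varphi(\mathfrak{h})\cap\Sigma^0_{j,\ell})=1\}$. Then there is a nonempty Zariski-open subset $W\subset U$ on which the map $\ell\mapsto\varphi^{-1}(\varphi(\mathfrak{h})\cap\Sigma^0_{j,\ell})\in\mathbb{P}(\mathfrak{h})$ is a regular map, given in homogeneous coordinates on $\mathbb{P}(V_j)$ and $\mathbb{P}(\mathfrak{h})$ by homogeneous polynomials of a common degree at most $m$.
   Context: $V_1,\ldots,V_m$ are 2-dimensional vector spaces over $\mathbb{F}=\mathbb{R}$ or $\mathbb{C}$, $V^*=V_1^*\otimes\cdots\otimes V_m^*$; for $\ell\in\mathbb{P}(V_j)$, $\Sigma^0_{j,\ell}=V_1^*\otimes\cdots\otimes\ell^0\otimes\cdots\otimes V_m^*$ with $\ell^0$ the annihilator of $\ell$ in slot $j$. A factorization structure of dimension $m$ is an injective linear map $\varphi:\mathfrak{h}\to V^*$, $\dim\mathfrak{h}=m+1$, with $\dim(\varphi(\mathfrak{h})\cap\Sigma^0_{j,\ell})=1$ for every $j$ and all $\ell$ in a nonempty Zariski-open subset of $\mathbb{P}(V_j)$. *)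

theory Defs
  imports Complex_Main
begin

text \<open>The field F is any type of class real_normed_field (i.e. R or C).
  V_j = F^2 with standard basis e_False, e_True; V_j^* has the dual basis.
  V^* = V_1^* (x) ... (x) V_m^* is identified with functions on the index set
  idx m = {s :: nat => bool. s i only possibly True for i in {1..m}};
  s j = False/True selects the dual basis vector in slot j.
  h = F^(m+1) is identified with functions nat => F supported in {0..m};
  phi is given by the images phi k of the basis vectors e_k, k = 0..m.
  A point l of P(V_j) is represented by a nonzero vector (x,y) in F^2 spanning it.\<close>

definition idx :: "nat \<Rightarrow> (nat \<Rightarrow> bool) set" where
  "idx m = {s. \<forall>i. s i \<longrightarrow> i \<in> {1..m}}"

definition tensors :: "nat \<Rightarrow> ((nat \<Rightarrow> bool) \<Rightarrow> 'a::field) set" where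
  "tensors m = {T. \<forall>s. s \<notin> idx m \<longrightarrow> T s = 0}"

definition hspace :: "nat \<Rightarrow> (nat \<Rightarrow> 'a::field) set" where
  "hspace m = {c. \<forall>k. m < k \<longrightarrow> c k = 0}"

definition lin :: "nat \<Rightarrow> (nat \<Rightarrow> (nat \<Rightarrow> bool) \<Rightarrow> 'a::field) \<Rightarrow> (nat \<Rightarrow> 'a) \<Rightarrow> ((nat \<Rightarrow> bool) \<Rightarrow> 'a)" where
  "lin m phi c = (\<lambda>s. \<Sum>k\<le>m. c k * phi k s)"

text \<open>Sigma^0_{j,l} = V_1^* (x) ... (x) l^0 (x) ... (x) V_m^*, l spanned by v = (x,y):
  exactly the tensors whose contraction with v in slot j vanishes.\<close>
definition Sigma0 :: "nat \<Rightarrow> nat \<Rightarrow> 'a \<times> 'a \<Rightarrow> ((nat \<Rightarrow> bool) \<Rightarrow> 'a::field) set" where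
  "Sigma0 m j v = {T \<in> tensors m. \<forall>s\<in>idx m.
       fst v * T (s(j := False)) + snd v * T (s(j := True)) = 0}"

definition one_dim :: "('b \<Rightarrow> 'a::field) set \<Rightarrow> bool" where
  "one_dim S \<longleftrightarrow> (\<exists>T. T \<noteq> (\<lambda>_. 0) \<and> S = {(\<lambda>s. t * T s) | t. True})"

definition image_phi :: "nat \<Rightarrow> (nat \<Rightarrow> (nat \<Rightarrow> bool) \<Rightarrow> 'a::field) \<Rightarrow> ((nat \<Rightarrow> bool) \<Rightarrow> 'a) set" where
  "image_phi m phi = lin m phi ` hspace m"

definition hpoly :: "nat \<Rightarrow> (nat \<Rightarrow> 'a::field) \<Rightarrow> 'a \<times> 'a \<Rightarrow> 'a" where
  "hpoly d c v = (\<Sum>i\<le>d. c i * fst v ^ i * snd v ^ (d - i))"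

text \<open>Zariski-open subsets of P^1 (as sets of nonzero representatives): complements of
  common zero loci of families of homogeneous polynomials.\<close>
definition zariski_open_P1 :: "('a::field \<times> 'a) set \<Rightarrow> bool" where
  "zariski_open_P1 W \<longleftrightarrow> (\<exists>P :: (nat \<times> (nat \<Rightarrow> 'a)) set.
      W = {v. v \<noteq> (0,0) \<and> (\<exists>(d,c)\<in>P. hpoly d c v \<noteq> 0)})"

definition goodU :: "nat \<Rightarrow> (nat \<Rightarrow> (nat \<Rightarrow> bool) \<Rightarrow> 'a::field) \<Rightarrow> nat \<Rightarrow> ('a \<times> 'a) set" where
  "goodU m phi j = {v. v \<noteq> (0,0) \<and> one_dim (image_phi m phi \<inter> Sigma0 m j v)}"

definition factorization_structure :: "nat \<Rightarrow> (nat \<Rightarrow> (nat \<Rightarrow> bool) \<Rightarrow> 'a::field) \<Rightarrow> bool" where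
  "factorization_structure m phi \<longleftrightarrow>
     (\<forall>k\<le>m. phi k \<in> tensors m) \<and>
     inj_on (lin m phi) (hspace m) \<and>
     (\<forall>j\<in>{1..m}. \<exists>W. zariski_open_P1 W \<and> W \<noteq> {} \<and> W \<subseteq> goodU m phi j)"

end

theory Submission
  imports Defs "Jordan_Normal_Form.Matrix_Kernel"
begin

text \<open>For a point l = [x : y] of P(V_j) the preimage of Sigma^0_{j,l} in h is the kernel of a
  matrix x A_1 + y A_2 depending linearly on (x, y). At a point l_0 of U this kernel is a line, so
  row reduction finds m fixed linear combinations of the rows which cut out the same line at l_0.
  The m + 1 signed maximal minors of the resulting m x (m + 1) matrix are homogeneous of degree m in
  (x, y); wherever they do not all vanish they span the kernel of that matrix, which contains the
  kernel of x A_1 + y A_2. So on U, off the common zero locus of the minors, the line is spanned by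
  the vector of minors.\<close>

section \<open>Homogeneous polynomials in two variables\<close>

definition homogeneous_poly :: "nat \<Rightarrow> ('a::field \<times> 'a \<Rightarrow> 'a) \<Rightarrow> bool" where
  "homogeneous_poly d f \<longleftrightarrow> (\<exists>c. f = hpoly d c)"

lemma homogeneous_poly_hpoly [simp]: "homogeneous_poly d (hpoly d c)"
  unfolding homogeneous_poly_def by blast

lemma hpoly_mult_fst: "hpoly d c v * fst v = hpoly (Suc d) (\<lambda>i. if i = 0 then 0 else c (i - 1)) v"
proof -
  have "hpoly (Suc d) (\<lambda>i. if i = 0 then 0 else c (i - 1)) v
      = (\<Sum>i\<le>d. c i * fst v ^ Suc i * snd v ^ (d - i))"
    unfolding hpoly_def by (subst sum.atMost_Suc_shift) simp
  also have "\<dots> = hpoly d c v * fst v"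
    unfolding hpoly_def sum_distrib_right by (rule sum.cong) (auto simp: algebra_simps)
  finally show ?thesis by simp
qed

lemma hpoly_mult_snd: "hpoly d c v * snd v = hpoly (Suc d) (\<lambda>i. if i \<le> d then c i else 0) v"
  unfolding hpoly_def sum.atMost_Suc
  by (auto simp: sum_distrib_left sum_distrib_right algebra_simps Suc_diff_le intro!: sum.cong)

lemma homogeneous_poly_const: "homogeneous_poly 0 (\<lambda>v. a)"
  unfolding homogeneous_poly_def by (rule exI[of _ "\<lambda>_. a"]) (simp add: hpoly_def fun_eq_iff)

lemma homogeneous_poly_zero: "homogeneous_poly d (\<lambda>v. 0)"
  unfolding homogeneous_poly_def by (rule exI[of _ "\<lambda>_. 0"]) (simp add: hpoly_def fun_eq_iff)

lemma homogeneous_poly_add: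
  assumes "homogeneous_poly d f" "homogeneous_poly d g"
  shows "homogeneous_poly d (\<lambda>v. f v + g v)"
proof -
  obtain a b where "f = hpoly d a" "g = hpoly d b"
    using assms unfolding homogeneous_poly_def by blast
  then have "(\<lambda>v. f v + g v) = hpoly d (\<lambda>i. a i + b i)"
    by (simp add: fun_eq_iff hpoly_def sum.distrib ring_distribs)
  then show ?thesis by simp
qed

lemma homogeneous_poly_cmult:
  assumes "homogeneous_poly d f"
  shows "homogeneous_poly d (\<lambda>v. a * f v)"
proof -
  obtain c where "f = hpoly d c" using assms unfolding homogeneous_poly_def by blast
  then have "(\<lambda>v. a * f v) = hpoly d (\<lambda>i. a * c i)"
    by (simp add: fun_eq_iff hpoly_def sum_distrib_left mult.assoc)
  then show ?thesis by simp
qed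

lemma homogeneous_poly_sum:
  "finite S \<Longrightarrow> (\<And>s. s \<in> S \<Longrightarrow> homogeneous_poly d (f s)) \<Longrightarrow>
    homogeneous_poly d (\<lambda>v. \<Sum>s\<in>S. f s v)"
proof (induction S rule: finite_induct)
  case (insert s S)
  have "homogeneous_poly d (\<lambda>v. f s v + (\<Sum>s\<in>S. f s v))"
    by (rule homogeneous_poly_add) (use insert in auto)
  with insert(1,2) show ?case by simp
qed (simp add: homogeneous_poly_zero)

lemma homogeneous_poly_mult_fst:
  "homogeneous_poly d f \<Longrightarrow> homogeneous_poly (Suc d) (\<lambda>v. f v * fst v)"
proof -
  assume "homogeneous_poly d f"
  then obtain c where "f = hpoly d c" unfolding homogeneous_poly_def by blast
  then have "(\<lambda>v. f v * fst v) = hpoly (Suc d) (\<lambda>i. if i = 0 then 0 else c (i - 1))"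
    by (simp add: hpoly_mult_fst)
  then show ?thesis by simp
qed

lemma homogeneous_poly_mult_snd:
  "homogeneous_poly d f \<Longrightarrow> homogeneous_poly (Suc d) (\<lambda>v. f v * snd v)"
proof -
  assume "homogeneous_poly d f"
  then obtain c where "f = hpoly d c" unfolding homogeneous_poly_def by blast
  then have "(\<lambda>v. f v * snd v) = hpoly (Suc d) (\<lambda>i. if i \<le> d then c i else 0)"
    by (simp add: hpoly_mult_snd)
  then show ?thesis by simp
qed

lemma homogeneous_poly_mult_fst_power:
  assumes "homogeneous_poly d f"
  shows "homogeneous_poly (d + i) (\<lambda>v. f v * fst v ^ i)"
proof (induction i)
  case (Suc i)
  have "homogeneous_poly (Suc (d + i)) (\<lambda>v. f v * fst v ^ i * fst v)"
    by (rule homogeneous_poly_mult_fst[OF Suc])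
  then show ?case by (simp add: ac_simps)
qed (simp add: assms)

lemma homogeneous_poly_mult_snd_power:
  assumes "homogeneous_poly d f"
  shows "homogeneous_poly (d + k) (\<lambda>v. f v * snd v ^ k)"
proof (induction k)
  case (Suc k)
  have "homogeneous_poly (Suc (d + k)) (\<lambda>v. f v * snd v ^ k * snd v)"
    by (rule homogeneous_poly_mult_snd[OF Suc])
  then show ?case by (simp add: ac_simps)
qed (simp add: assms)

lemma homogeneous_poly_mult:
  assumes f: "homogeneous_poly d f" and g: "homogeneous_poly e g"
  shows "homogeneous_poly (d + e) (\<lambda>v. f v * g v)"
proof -
  obtain b where b: "g = hpoly e b" using g unfolding homogeneous_poly_def by blast
  have "homogeneous_poly (d + e) (\<lambda>v. \<Sum>i\<le>e. b i * (f v * fst v ^ i * snd v ^ (e - i)))"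
  proof (rule homogeneous_poly_sum)
    fix i assume "i \<in> {..e}"
    then have "d + e = d + i + (e - i)" by simp
    moreover have "homogeneous_poly (d + i + (e - i)) (\<lambda>v. b i * (f v * fst v ^ i * snd v ^ (e - i)))"
      by (intro homogeneous_poly_cmult homogeneous_poly_mult_snd_power homogeneous_poly_mult_fst_power f)
    ultimately show "homogeneous_poly (d + e) (\<lambda>v. b i * (f v * fst v ^ i * snd v ^ (e - i)))"
      by simp
  qed simp
  moreover have "f v * g v = (\<Sum>i\<le>e. b i * (f v * fst v ^ i * snd v ^ (e - i)))" for v
    by (simp add: b hpoly_def sum_distrib_left algebra_simps)
  ultimately show ?thesis by simp
qed

lemma homogeneous_poly_linear: "homogeneous_poly 1 (\<lambda>v. fst v * a + snd v * b)"
proof -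
  have "(\<lambda>v. fst v * a + snd v * b) = hpoly 1 (\<lambda>i. if i = 0 then b else a)"
    by (simp add: fun_eq_iff hpoly_def algebra_simps)
  then show ?thesis by simp
qed

lemma homogeneous_poly_prod:
  "finite S \<Longrightarrow> (\<And>i. i \<in> S \<Longrightarrow> homogeneous_poly (d i) (f i)) \<Longrightarrow>
    homogeneous_poly (\<Sum>i\<in>S. d i) (\<lambda>v. \<Prod>i\<in>S. f i v)"
proof (induction S rule: finite_induct)
  case (insert i S)
  have "homogeneous_poly (d i + (\<Sum>i\<in>S. d i)) (\<lambda>v. f i v * (\<Prod>i\<in>S. f i v))"
    by (rule homogeneous_poly_mult) (use insert in auto)
  with insert(1,2) show ?case by simp
qed (simp add: homogeneous_poly_const)

lemma homogeneous_poly_det: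
  assumes "\<And>v. B v \<in> carrier_mat n n"
    and "\<And>i k. i < n \<Longrightarrow> k < n \<Longrightarrow> homogeneous_poly 1 (\<lambda>v. B v $$ (i, k))"
  shows "homogeneous_poly n (\<lambda>v. det (B v))"
proof -
  have "homogeneous_poly n (\<lambda>v. \<Sum>p | p permutes {0..<n}. signof p * (\<Prod>i = 0..<n. B v $$ (i, p i)))"
  proof (intro homogeneous_poly_sum homogeneous_poly_cmult)
    fix p assume "p \<in> {p. p permutes {0..<n}}"
    then have "i < n \<Longrightarrow> p i < n" for i by (simp add: permutes_in_image)
    then have "homogeneous_poly (\<Sum>i = 0..<n. 1) (\<lambda>v. \<Prod>i = 0..<n. B v $$ (i, p i))"
      by (intro homogeneous_poly_prod) (use assms(2) in \<open>auto simp flip: One_nat_def\<close>)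
    then show "homogeneous_poly n (\<lambda>v. \<Prod>i = 0..<n. B v $$ (i, p i))" by simp
  qed (simp add: finite_permutations)
  then show ?thesis using det_def'[OF assms(1)] by simp
qed

section \<open>Zariski-open subsets of the projective line\<close>

lemma zariski_open_P1_nonvanishing:
  "zariski_open_P1 {v. v \<noteq> (0, 0) \<and> (\<exists>k\<in>K. hpoly d (G k) v \<noteq> 0)}"
  unfolding zariski_open_P1_def by (rule exI[of _ "(\<lambda>k. (d, G k)) ` K"]) auto

lemma zariski_open_P1_Int:
  assumes "zariski_open_P1 W\<^sub>1" "zariski_open_P1 W\<^sub>2"
  shows "zariski_open_P1 (W\<^sub>1 \<inter> W\<^sub>2)"
proof -
  obtain P\<^sub>1 P\<^sub>2 :: "(nat \<times> (nat \<Rightarrow> 'a)) set" where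
    W: "W\<^sub>1 = {v. v \<noteq> (0, 0) \<and> (\<exists>(d, a)\<in>P\<^sub>1. hpoly d a v \<noteq> 0)}"
       "W\<^sub>2 = {v. v \<noteq> (0, 0) \<and> (\<exists>(e, b)\<in>P\<^sub>2. hpoly e b v \<noteq> 0)}"
    using assms unfolding zariski_open_P1_def by blast
  have prod: "\<exists>c. hpoly (d + e) c = (\<lambda>v. hpoly d a v * hpoly e b v)" for d e a b
  proof -
    have "homogeneous_poly (d + e) (\<lambda>v. hpoly d a v * hpoly e b v)"
      by (rule homogeneous_poly_mult) simp_all
    then show ?thesis unfolding homogeneous_poly_def by metis
  qed
  define P where "P = {(d + e, c) | d a e b c. (d, a) \<in> P\<^sub>1 \<and> (e, b) \<in> P\<^sub>2 \<and>
    hpoly (d + e) c = (\<lambda>v. hpoly d a v * hpoly e b v)}"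
  have "W\<^sub>1 \<inter> W\<^sub>2 = {v. v \<noteq> (0, 0) \<and> (\<exists>(d, c)\<in>P. hpoly d c v \<noteq> 0)}"
  proof (rule Set.set_eqI, rule iffI)
    fix v assume "v \<in> W\<^sub>1 \<inter> W\<^sub>2"
    then obtain d a e b where v: "v \<noteq> (0, 0)" "(d, a) \<in> P\<^sub>1" "(e, b) \<in> P\<^sub>2"
      and nz: "hpoly d a v \<noteq> 0" "hpoly e b v \<noteq> 0"
      unfolding W by blast
    obtain c where c: "hpoly (d + e) c = (\<lambda>v. hpoly d a v * hpoly e b v)" using prod by blast
    then have "(d + e, c) \<in> P" using v unfolding P_def by blast
    moreover have "hpoly (d + e) c v \<noteq> 0" using nz by (simp add: c)
    ultimately show "v \<in> {v. v \<noteq> (0, 0) \<and> (\<exists>(d, c)\<in>P. hpoly d c v \<noteq> 0)}" using v(1) by blast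
  next
    fix v assume "v \<in> {v. v \<noteq> (0, 0) \<and> (\<exists>(d, c)\<in>P. hpoly d c v \<noteq> 0)}"
    then obtain d' c where v: "v \<noteq> (0, 0)" "(d', c) \<in> P" "hpoly d' c v \<noteq> 0" by blast
    then obtain d a e b where "(d, a) \<in> P\<^sub>1" "(e, b) \<in> P\<^sub>2" "hpoly d a v * hpoly e b v \<noteq> 0"
      unfolding P_def by auto
    then show "v \<in> W\<^sub>1 \<inter> W\<^sub>2" unfolding W using v(1) by auto
  qed
  then show ?thesis unfolding zariski_open_P1_def by blast
qed

section \<open>Signed maximal minors of an m x (m + 1) matrix\<close>

definition vec_line :: "'a::comm_ring_1 vec \<Rightarrow> 'a vec set" where
  "vec_line c = {t \<cdot>\<^sub>v c | t. True}"

lemma vec_line_self: "c \<in> vec_line c"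
  unfolding vec_line_def by (rule CollectI, rule exI[of _ 1]) simp

lemma vec_line_eqI:
  fixes c s :: "'a::field vec"
  assumes c: "c \<in> carrier_vec n" "c \<noteq> 0\<^sub>v n" and sub: "vec_line c \<subseteq> vec_line s"
  shows "vec_line c = vec_line s"
proof -
  obtain t0 where t0: "c = t0 \<cdot>\<^sub>v s" using sub vec_line_self unfolding vec_line_def by blast
  then have "t0 \<noteq> 0" using c by (auto simp: vec_eq_iff)
  then have "t \<cdot>\<^sub>v s = (t / t0) \<cdot>\<^sub>v c" for t by (simp add: t0 smult_smult_assoc)
  then have "vec_line s \<subseteq> vec_line c" unfolding vec_line_def by blast
  with sub show ?thesis by blast
qed

definition border_row :: "'a vec \<Rightarrow> 'a mat \<Rightarrow> 'a mat" where
  "border_row u B = mat (Suc (dim_row B)) (dim_col B) (\<lambda>(i, k). if i = 0 then u $ k else B $$ (i - 1, k))"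

text \<open>The generalised cross product of the rows of an m x (m + 1) matrix B: Laplace expansion along
  the first row gives det (border_row u B) = u \<bullet> signed_minors B (lemma det_border_row).\<close>

definition signed_minors :: "'a::comm_ring_1 mat \<Rightarrow> 'a vec" where
  "signed_minors B = vec (dim_col B) (\<lambda>k. cofactor (border_row (0\<^sub>v (dim_col B)) B) 0 k)"

lemma dim_border_row [simp]:
  "dim_row (border_row u B) = Suc (dim_row B)" "dim_col (border_row u B) = dim_col B"
  unfolding border_row_def by simp_all

lemma border_row_carrier [simp]: "B \<in> carrier_mat m n \<Longrightarrow> border_row u B \<in> carrier_mat (Suc m) n"
  unfolding border_row_def by simp

lemma index_border_row [simp]:
  "i < Suc (dim_row B) \<Longrightarrow> k < dim_col B \<Longrightarrow>
    border_row u B $$ (i, k) = (if i = 0 then u $ k else B $$ (i - 1, k))"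
  unfolding border_row_def by simp

lemma dim_signed_minors [simp]: "dim_vec (signed_minors B) = dim_col B"
  unfolding signed_minors_def by simp

lemma signed_minors_carrier [simp]: "B \<in> carrier_mat m n \<Longrightarrow> signed_minors B \<in> carrier_vec n"
  unfolding signed_minors_def by simp

lemma cofactor_border_row:
  assumes "B \<in> carrier_mat m n" "k < n"
  shows "cofactor (border_row u B) 0 k = signed_minors B $ k"
proof -
  have "mat_delete (border_row u B) 0 k = mat_delete (border_row (0\<^sub>v n) B) 0 k"
    by (rule eq_matI) (use assms in \<open>auto simp: mat_delete_def border_row_def\<close>)
  then show ?thesis using assms unfolding signed_minors_def cofactor_def by simp
qed

lemma det_border_row:
  assumes B: "B \<in> carrier_mat m (Suc m)" and u: "u \<in> carrier_vec (Suc m)"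
  shows "det (border_row u B) = u \<bullet> signed_minors B"
proof -
  have "det (border_row u B) = (\<Sum>k<Suc m. border_row u B $$ (0, k) * cofactor (border_row u B) 0 k)"
    by (rule laplace_expansion_row) (use B in auto)
  also have "\<dots> = (\<Sum>k<Suc m. u $ k * signed_minors B $ k)"
    by (rule sum.cong) (use B in \<open>auto simp: cofactor_border_row\<close>)
  also have "\<dots> = u \<bullet> signed_minors B"
    using B by (simp add: scalar_prod_def atLeast0LessThan)
  finally show ?thesis .
qed

lemma border_row_mult_vec:
  assumes "B \<in> carrier_mat m n" "u \<in> carrier_vec n" "y \<in> carrier_vec n" "i < Suc m"
  shows "(border_row u B *\<^sub>v y) $ i = (if i = 0 then u \<bullet> y else (B *\<^sub>v y) $ (i - 1))"
  using assms by (auto simp: border_row_def scalar_prod_def)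

lemma border_row_mult_vec_eq_0:
  assumes B: "B \<in> carrier_mat m n" and u: "u \<in> carrier_vec n" and y: "y \<in> carrier_vec n"
  shows "border_row u B *\<^sub>v y = 0\<^sub>v (Suc m) \<longleftrightarrow> u \<bullet> y = 0 \<and> B *\<^sub>v y = 0\<^sub>v m"
proof
  assume "border_row u B *\<^sub>v y = 0\<^sub>v (Suc m)"
  then have entry: "(if i = 0 then u \<bullet> y else (B *\<^sub>v y) $ (i - 1)) = 0" if "i < Suc m" for i
    using border_row_mult_vec[OF B u y that] that by simp
  show "u \<bullet> y = 0 \<and> B *\<^sub>v y = 0\<^sub>v m"
    using entry[of 0] entry[of "Suc _"] B by (auto simp: vec_eq_iff simp del: index_mult_mat_vec)
next
  assume "u \<bullet> y = 0 \<and> B *\<^sub>v y = 0\<^sub>v m"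
  then show "border_row u B *\<^sub>v y = 0\<^sub>v (Suc m)"
    using B u y by (intro eq_vecI) (auto simp: border_row_mult_vec simp del: index_mult_mat_vec)
qed

lemma mult_signed_minors:
  assumes B: "B \<in> carrier_mat m (Suc m)"
  shows "B *\<^sub>v signed_minors B = 0\<^sub>v m"
proof (rule eq_vecI)
  fix i assume "i < dim_vec (0\<^sub>v m :: 'a vec)"
  then have i: "i < m" by simp
  have "(B *\<^sub>v signed_minors B) $ i = det (border_row (row B i) B)"
    using B i by (simp add: det_border_row)
  also have "\<dots> = 0"
  proof (rule det_identical_rows[of _ "Suc m" 0 "Suc i"])
    show "row (border_row (row B i) B) 0 = row (border_row (row B i) B) (Suc i)"
      using B i by (auto simp: border_row_def)
  qed (use B i in auto)
  finally show "(B *\<^sub>v signed_minors B) $ i = 0\<^sub>v m $ i" using i by simp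
qed (use B in simp)

lemma kernel_subset_line_signed_minors:
  fixes B :: "'a::field mat"
  assumes B: "B \<in> carrier_mat m (Suc m)" and s: "signed_minors B \<noteq> 0\<^sub>v (Suc m)"
  shows "mat_kernel B \<subseteq> vec_line (signed_minors B)"
proof
  fix x assume "x \<in> mat_kernel B"
  then have x: "x \<in> carrier_vec (Suc m)" "B *\<^sub>v x = 0\<^sub>v m" using mat_kernelD[OF B] by auto
  let ?s = "signed_minors B"
  have sc: "?s \<in> carrier_vec (Suc m)" using B by simp
  obtain k0 where k0: "k0 < Suc m" "?s $ k0 \<noteq> 0" using s sc B by (auto simp: vec_eq_iff)
  \<comment> \<open>y is killed by B and by the k0-th coordinate, i.e. by an invertible bordered matrix\<close>
  define y where "y = ?s $ k0 \<cdot>\<^sub>v x - x $ k0 \<cdot>\<^sub>v ?s"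
  have y: "y \<in> carrier_vec (Suc m)" using x sc unfolding y_def by simp
  have "B *\<^sub>v y = ?s $ k0 \<cdot>\<^sub>v (B *\<^sub>v x) - x $ k0 \<cdot>\<^sub>v (B *\<^sub>v ?s)"
    using B x sc unfolding y_def
    by (simp add: mult_minus_distrib_mat_vec mult_mat_vec[OF B x(1)] mult_mat_vec[OF B sc])
  then have "B *\<^sub>v y = 0\<^sub>v m" using x B by (auto simp: mult_signed_minors vec_eq_iff)
  moreover have "y $ k0 = 0" using x(1) B k0(1) unfolding y_def by simp
  ultimately have "border_row (unit_vec (Suc m) k0) B *\<^sub>v y = 0\<^sub>v (Suc m)"
    using B y k0(1) by (simp add: border_row_mult_vec_eq_0)
  moreover have "det (border_row (unit_vec (Suc m) k0) B) \<noteq> 0"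
    using B k0 by (simp add: det_border_row)
  ultimately have "y = 0\<^sub>v (Suc m)"
    using det_0_iff_vec_prod_zero_field[OF border_row_carrier[OF B]] y by blast
  then have "x = (x $ k0 / ?s $ k0) \<cdot>\<^sub>v ?s"
    using x sc k0 unfolding y_def by (auto simp: vec_eq_iff field_simps)
  then show "x \<in> vec_line ?s" unfolding vec_line_def by blast
qed

lemma signed_minors_nonzero:
  fixes B :: "'a::field mat"
  assumes B: "B \<in> carrier_mat m (Suc m)"
    and c: "c \<in> carrier_vec (Suc m)" "c \<noteq> 0\<^sub>v (Suc m)" and ker: "mat_kernel B \<subseteq> vec_line c"
  shows "signed_minors B \<noteq> 0\<^sub>v (Suc m)"
proof
  assume s: "signed_minors B = 0\<^sub>v (Suc m)"
  obtain q where q: "q < Suc m" "c $ q \<noteq> 0" using c by (auto simp: vec_eq_iff)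
  have "det (border_row (unit_vec (Suc m) q) B) = 0"
    using B q by (simp add: det_border_row s)
  then obtain y where y: "y \<in> carrier_vec (Suc m)" "y \<noteq> 0\<^sub>v (Suc m)"
    and border: "border_row (unit_vec (Suc m) q) B *\<^sub>v y = 0\<^sub>v (Suc m)"
    using det_0_iff_vec_prod_zero_field[OF border_row_carrier[OF B]] by blast
  then have yq: "y $ q = 0" and "B *\<^sub>v y = 0\<^sub>v m"
    using B y(1) q(1) by (simp_all add: border_row_mult_vec_eq_0)
  then have "y \<in> vec_line c" using ker mat_kernelI[OF B y(1)] by blast
  then obtain t where "y = t \<cdot>\<^sub>v c" unfolding vec_line_def by blast
  then show False using y yq q c by (auto simp: vec_eq_iff)
qed

section \<open>Row reduction\<close>

lemma pivot_fun_all_columns_kernel_trivial: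
  fixes C :: "'a::field mat"
  assumes C: "C \<in> carrier_mat N n" and p: "pivot_fun C p n"
    and all: "\<And>k. k < n \<Longrightarrow> \<exists>i<N. p i = k"
    and x: "x \<in> carrier_vec n" "C *\<^sub>v x = 0\<^sub>v N"
  shows "x = 0\<^sub>v n"
proof (rule eq_vecI)
  note pd = pivot_funD[OF carrier_matD(1)[OF C] p]
  fix k assume "k < dim_vec (0\<^sub>v n :: 'a vec)"
  then have k: "k < n" by simp
  obtain i where i: "i < N" "p i = k" using all[OF k] by blast
  have "(C *\<^sub>v x) $ i = (\<Sum>l<n. C $$ (i, l) * x $ l)"
    using C x(1) i(1) by (simp add: scalar_prod_def atLeast0LessThan)
  also have "\<dots> = (\<Sum>l<n. if l = k then x $ l else 0)"
  proof (rule sum.cong)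
    fix l assume l: "l \<in> {..<n}"
    obtain i' where i': "i' < N" "p i' = l" using all l by blast
    show "C $$ (i, l) * x $ l = (if l = k then x $ l else 0)"
    proof (cases "l = k")
      case False
      then have "i' \<noteq> i" using i i' by auto
      then show ?thesis using pd(5)[OF i'(1) _ i(1)] i' l False by auto
    qed (use pd(4)[OF i(1)] i k in auto)
  qed simp
  also have "\<dots> = x $ k" using k by simp
  finally show "x $ k = 0\<^sub>v n $ k" using x i k by simp
qed (use x in simp)

lemma pivot_fun_zero_row_mono:
  assumes "pivot_fun C p n" "dim_row C = N"
    and "i < N" "p i = n" "i \<le> i'" "i' < N"
  shows "p i' = n"
  using assms(5,6)
proof (induction i')
  case (Suc i')
  note pd = pivot_funD[OF assms(2,1)]
  show ?case
  proof (cases "i = Suc i'")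
    case False
    then have "p i' = n" using Suc by simp
    then show ?thesis using pd(3)[of i'] pd(1)[of "Suc i'"] Suc by fastforce
  qed (use assms in simp)
qed (use assms in simp)

lemma pivot_fun_card_pivot_rows:
  fixes C :: "'a::field mat"
  assumes p: "pivot_fun C p n" and C: "dim_row C = N"
    and q: "q < n" "\<And>i. i < N \<Longrightarrow> p i \<noteq> q"
  shows "card {i. i < N \<and> p i \<noteq> n} < n"
proof -
  note pd = pivot_funD[OF C p]
  define PR where "PR = {i. i < N \<and> p i \<noteq> n}"
  have "p ` PR \<subseteq> {0..<n} - {q}" using pd(1) q(2) unfolding PR_def by fastforce
  moreover have "inj_on p PR"
  proof (rule inj_onI)
    fix i i' assume ii: "i \<in> PR" "i' \<in> PR" "p i = p i'"
    then have "p i' < n" using pd(1)[of i'] unfolding PR_def by fastforce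
    show "i = i'"
    proof (rule ccontr)
      assume "i \<noteq> i'"
      then have "C $$ (i', p i) = 0" using pd(5)[of i i'] ii \<open>p i' < n\<close> unfolding PR_def by simp
      moreover have "C $$ (i', p i') = 1" using pd(4)[of i'] ii \<open>p i' < n\<close> unfolding PR_def by simp
      ultimately show False using ii(3) by simp
    qed
  qed
  ultimately have "card PR \<le> n - 1"
    using card_inj_on_le[of p PR "{0..<n} - {q}"] q(1) by simp
  then show ?thesis using q(1) unfolding PR_def by linarith
qed

lemma row_echelon_form_nontrivial_kernel_zero_rows:
  fixes C :: "'a::field mat"
  assumes C: "C \<in> carrier_mat N (Suc m)" and ref: "row_echelon_form C"
    and x: "x \<in> carrier_vec (Suc m)" "x \<noteq> 0\<^sub>v (Suc m)" "C *\<^sub>v x = 0\<^sub>v N"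
    and i: "m \<le> i" "i < N" and k: "k < Suc m"
  shows "C $$ (i, k) = 0"
proof -
  obtain p where p: "pivot_fun C p (Suc m)" using ref C unfolding row_echelon_form_def by auto
  note pd = pivot_funD[OF carrier_matD(1)[OF C] p]
  define PR where "PR = {i. i < N \<and> p i \<noteq> Suc m}"
  obtain q where "q < Suc m" "\<And>i. i < N \<Longrightarrow> p i \<noteq> q"
    using pivot_fun_all_columns_kernel_trivial[OF C p _ x(1,3)] x(2) by blast
  then have "card PR \<le> m"
    using pivot_fun_card_pivot_rows[OF p carrier_matD(1)[OF C]] unfolding PR_def by fastforce
  moreover have "{0..j} \<subseteq> PR" if "j \<in> PR" for j
  proof
    fix j' assume "j' \<in> {0..j}"
    then show "j' \<in> PR"
      using pivot_fun_zero_row_mono[OF p carrier_matD(1)[OF C], of j' j] that unfolding PR_def by auto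
  qed
  moreover have "finite PR" unfolding PR_def by simp
  ultimately have "i \<notin> PR"
    using card_mono[of PR "{0..i}"] i(1) by fastforce
  then show ?thesis using pd(2)[of i k] i k unfolding PR_def by auto
qed

lemma mat_kernel_truncate_zero_rows:
  assumes C: "C \<in> carrier_mat N n" and zero: "\<And>i k. m \<le> i \<Longrightarrow> i < N \<Longrightarrow> k < n \<Longrightarrow> C $$ (i, k) = 0"
  shows "mat_kernel (mat m n (\<lambda>(a, k). if a < N then C $$ (a, k) else 0)) = mat_kernel C"
    (is "mat_kernel ?T = _")
proof (rule Set.set_eqI)
  fix y
  show "y \<in> mat_kernel ?T \<longleftrightarrow> y \<in> mat_kernel C"
  proof (cases "y \<in> carrier_vec n")
    case y: True
    have Ty: "(?T *\<^sub>v y) $ a = (if a < N then (C *\<^sub>v y) $ a else 0)" if "a < m" for a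
      using that y C by (auto simp: scalar_prod_def)
    have Cy: "(C *\<^sub>v y) $ i = 0" if "m \<le> i" "i < N" for i
      using that y C zero by (simp add: scalar_prod_def)
    have "?T *\<^sub>v y = 0\<^sub>v m \<longleftrightarrow> (\<forall>a<m. (?T *\<^sub>v y) $ a = 0)" by (auto simp: vec_eq_iff)
    also have "\<dots> \<longleftrightarrow> (\<forall>i<N. (C *\<^sub>v y) $ i = 0)"
    proof (intro iffI allI impI)
      fix i assume "\<forall>a<m. (?T *\<^sub>v y) $ a = 0" "i < N"
      then show "(C *\<^sub>v y) $ i = 0" using Ty[of i] Cy[of i] by (cases "i < m") auto
    qed (use Ty in simp)
    also have "\<dots> \<longleftrightarrow> C *\<^sub>v y = 0\<^sub>v N" using C by (auto simp: vec_eq_iff)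
    finally show ?thesis using y C by (simp add: mat_kernel_def)
  qed (use C in \<open>simp add: mat_kernel_def\<close>)
qed

lemma nontrivial_kernel_row_compression:
  fixes A :: "'a::field mat"
  assumes A: "A \<in> carrier_mat N (Suc m)"
    and x: "x \<in> mat_kernel A" "x \<noteq> 0\<^sub>v (Suc m)"
  obtains R where "R \<in> carrier_mat m N" "mat_kernel (R * A) = mat_kernel A"
proof -
  obtain C where C_def: "gauss_jordan_single A = C" by simp
  note gj = gauss_jordan_single[OF A C_def]
  obtain P where P: "C = P * A" "P \<in> carrier_mat N N" using gj(4) by blast
  have C: "C \<in> carrier_mat N (Suc m)" using gj(2) .
  have zero_rows: "C $$ (i, k) = 0" if "m \<le> i" "i < N" "k < Suc m" for i k
    using row_echelon_form_nontrivial_kernel_zero_rows[OF C gj(3) _ x(2) _ that] x(1) gj(1) A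
    by (auto simp: mat_kernel_def)
  define R where "R = mat m N (\<lambda>(a, r). if a < N then P $$ (a, r) else 0)"
  have R: "R \<in> carrier_mat m N" unfolding R_def by simp
  have "R * A = mat m (Suc m) (\<lambda>(a, k). if a < N then C $$ (a, k) else 0)"
    by (rule eq_matI) (use A P in \<open>auto simp: R_def scalar_prod_def intro!: sum.cong\<close>)
  then have "mat_kernel (R * A) = mat_kernel C"
    using mat_kernel_truncate_zero_rows[OF C zero_rows] by simp
  also have "mat_kernel C = mat_kernel A"
    using gj(1) A C by (auto simp: mat_kernel_def)
  finally show ?thesis using that R by blast
qed

section \<open>Pencils of matrices\<close>

definition pencil :: "'a::comm_ring_1 mat \<Rightarrow> 'a mat \<Rightarrow> 'a \<times> 'a \<Rightarrow> 'a mat" where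
  "pencil A\<^sub>1 A\<^sub>2 v = fst v \<cdot>\<^sub>m A\<^sub>1 + snd v \<cdot>\<^sub>m A\<^sub>2"

lemma dim_pencil [simp]:
  "dim_row (pencil A\<^sub>1 A\<^sub>2 v) = dim_row A\<^sub>2" "dim_col (pencil A\<^sub>1 A\<^sub>2 v) = dim_col A\<^sub>2"
  unfolding pencil_def by simp_all

lemma pencil_carrier [simp]:
  "A\<^sub>1 \<in> carrier_mat n k \<Longrightarrow> A\<^sub>2 \<in> carrier_mat n k \<Longrightarrow> pencil A\<^sub>1 A\<^sub>2 v \<in> carrier_mat n k"
  unfolding pencil_def by simp

lemma index_pencil:
  "A\<^sub>1 \<in> carrier_mat n k \<Longrightarrow> A\<^sub>2 \<in> carrier_mat n k \<Longrightarrow> i < n \<Longrightarrow> l < k \<Longrightarrow>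
    pencil A\<^sub>1 A\<^sub>2 v $$ (i, l) = fst v * A\<^sub>1 $$ (i, l) + snd v * A\<^sub>2 $$ (i, l)"
  unfolding pencil_def by simp

lemma mult_pencil:
  assumes "R \<in> carrier_mat m n" "A\<^sub>1 \<in> carrier_mat n k" "A\<^sub>2 \<in> carrier_mat n k"
  shows "R * pencil A\<^sub>1 A\<^sub>2 v = pencil (R * A\<^sub>1) (R * A\<^sub>2) v"
  using assms unfolding pencil_def
  by (simp add: mult_add_distrib_mat[OF assms(1) smult_carrier_mat smult_carrier_mat]
      mult_smult_distrib[OF assms(1)])

lemma homogeneous_poly_signed_minors_pencil:
  assumes A: "A\<^sub>1 \<in> carrier_mat m (Suc m)" "A\<^sub>2 \<in> carrier_mat m (Suc m)" and k: "k < Suc m"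
  shows "homogeneous_poly m (\<lambda>v. signed_minors (pencil A\<^sub>1 A\<^sub>2 v) $ k)"
proof -
  let ?D = "\<lambda>v. mat_delete (border_row (0\<^sub>v (Suc m)) (pencil A\<^sub>1 A\<^sub>2 v)) 0 k"
  have "homogeneous_poly m (\<lambda>v. (-1) ^ k * det (?D v))"
  proof (intro homogeneous_poly_cmult homogeneous_poly_det)
    show "?D v \<in> carrier_mat m m" for v using A by (simp add: mat_delete_def)
    fix i l assume "i < m" "l < m"
    then show "homogeneous_poly 1 (\<lambda>v. ?D v $$ (i, l))"
      using A k by (simp add: mat_delete_def index_pencil homogeneous_poly_linear flip: One_nat_def)
  qed
  then show ?thesis using A k by (simp add: signed_minors_def cofactor_def)
qed

lemma pencil_kernel_line_polynomial:
  fixes A\<^sub>1 A\<^sub>2 :: "'a::field mat"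
  assumes A: "A\<^sub>1 \<in> carrier_mat N (Suc m)" "A\<^sub>2 \<in> carrier_mat N (Suc m)"
    and c\<^sub>0: "c\<^sub>0 \<noteq> 0\<^sub>v (Suc m)" "mat_kernel (pencil A\<^sub>1 A\<^sub>2 v\<^sub>0) = vec_line c\<^sub>0"
  obtains F :: "nat \<Rightarrow> 'a \<times> 'a \<Rightarrow> 'a" where
    "\<And>k. k < Suc m \<Longrightarrow> homogeneous_poly m (F k)"
    "vec (Suc m) (\<lambda>k. F k v\<^sub>0) \<noteq> 0\<^sub>v (Suc m)"
    "\<And>v c. c \<noteq> 0\<^sub>v (Suc m) \<Longrightarrow> mat_kernel (pencil A\<^sub>1 A\<^sub>2 v) = vec_line c \<Longrightarrow>
      vec (Suc m) (\<lambda>k. F k v) \<noteq> 0\<^sub>v (Suc m) \<Longrightarrow>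
      mat_kernel (pencil A\<^sub>1 A\<^sub>2 v) = vec_line (vec (Suc m) (\<lambda>k. F k v))"
proof -
  have kernel_carrier: "mat_kernel (pencil A\<^sub>1 A\<^sub>2 v) \<subseteq> carrier_vec (Suc m)" for v
    by (rule mat_kernel_carrier) (rule pencil_carrier[OF A])
  have "c\<^sub>0 \<in> mat_kernel (pencil A\<^sub>1 A\<^sub>2 v\<^sub>0)" using c\<^sub>0(2) vec_line_self by blast
  then obtain R where R: "R \<in> carrier_mat m N"
    and ker_R: "mat_kernel (R * pencil A\<^sub>1 A\<^sub>2 v\<^sub>0) = mat_kernel (pencil A\<^sub>1 A\<^sub>2 v\<^sub>0)"
    using nontrivial_kernel_row_compression[OF pencil_carrier[OF A]] c\<^sub>0(1) by blast
  define B where "B v = pencil (R * A\<^sub>1) (R * A\<^sub>2) v" for v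
  have B: "B v \<in> carrier_mat m (Suc m)" for v using A R unfolding B_def by simp
  have RB: "R * pencil A\<^sub>1 A\<^sub>2 v = B v" for v unfolding B_def using R A by (rule mult_pencil)
  define F where "F k v = signed_minors (B v) $ k" for k v
  have F: "vec (Suc m) (\<lambda>k. F k v) = signed_minors (B v)" for v
    using B[of v] by (auto simp: F_def vec_eq_iff)
  show thesis
  proof
    show "homogeneous_poly m (F k)" if "k < Suc m" for k
      unfolding F_def B_def using A R that by (intro homogeneous_poly_signed_minors_pencil) auto
    have "c\<^sub>0 \<in> carrier_vec (Suc m)" using kernel_carrier c\<^sub>0(2) vec_line_self by blast
    then show "vec (Suc m) (\<lambda>k. F k v\<^sub>0) \<noteq> 0\<^sub>v (Suc m)"
      unfolding F using signed_minors_nonzero[OF B] c\<^sub>0 ker_R RB by simp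
  next
    fix v c assume c: "c \<noteq> 0\<^sub>v (Suc m)" "mat_kernel (pencil A\<^sub>1 A\<^sub>2 v) = vec_line c"
      and F_v: "vec (Suc m) (\<lambda>k. F k v) \<noteq> 0\<^sub>v (Suc m)"
    have "mat_kernel (pencil A\<^sub>1 A\<^sub>2 v) \<subseteq> mat_kernel (B v)"
      using mat_kernel_mult_subset[OF pencil_carrier[OF A] R] RB by simp
    also have "\<dots> \<subseteq> vec_line (signed_minors (B v))"
      using kernel_subset_line_signed_minors[OF B] F_v F by simp
    finally have "vec_line c \<subseteq> vec_line (signed_minors (B v))" using c(2) by simp
    moreover have "c \<in> carrier_vec (Suc m)" using kernel_carrier c(2) vec_line_self by blast
    ultimately show "mat_kernel (pencil A\<^sub>1 A\<^sub>2 v) = vec_line (vec (Suc m) (\<lambda>k. F k v))"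
      using vec_line_eqI c F by metis
  qed
qed

section \<open>The kernel of a factorization structure on Sigma^0\<close>

definition coeffs_of_vec :: "nat \<Rightarrow> 'a::zero vec \<Rightarrow> nat \<Rightarrow> 'a" where
  "coeffs_of_vec n x = (\<lambda>k. if k < n then x $ k else 0)"

lemma coeffs_of_vec_vec: "coeffs_of_vec n (vec n f) = (\<lambda>k. if k < n then f k else 0)"
  unfolding coeffs_of_vec_def by auto

lemma coeffs_of_vec_inj: "inj_on (coeffs_of_vec n) (carrier_vec n)"
proof (rule inj_onI)
  fix x y assume xy: "x \<in> carrier_vec n" "y \<in> carrier_vec n" "coeffs_of_vec n x = coeffs_of_vec n y"
  show "x = y"
  proof (rule eq_vecI)
    fix i assume "i < dim_vec y"
    then show "x $ i = y $ i" using fun_cong[OF xy(3), of i] xy by (simp add: coeffs_of_vec_def)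
  qed (use xy in simp)
qed

lemma coeffs_of_vec_smult:
  fixes x :: "'a::comm_ring_1 vec"
  shows "x \<in> carrier_vec n \<Longrightarrow> coeffs_of_vec n (t \<cdot>\<^sub>v x) = (\<lambda>k. t * coeffs_of_vec n x k)"
  unfolding coeffs_of_vec_def carrier_vec_def by (auto simp: fun_eq_iff)

lemma coeffs_of_vec_image_vec_line:
  fixes x :: "'a::comm_ring_1 vec"
  assumes "x \<in> carrier_vec n"
  shows "coeffs_of_vec n ` vec_line x = {(\<lambda>k. t * coeffs_of_vec n x k) | t. True}"
proof -
  have "coeffs_of_vec n ` vec_line x = {coeffs_of_vec n (t \<cdot>\<^sub>v x) | t. True}"
    unfolding vec_line_def by blast
  then show ?thesis using assms by (simp add: coeffs_of_vec_smult)
qed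

lemma finite_idx: "finite (idx m)"
proof -
  have "idx m \<subseteq> (\<lambda>S i. i \<in> S) ` Pow {1..m}"
  proof
    fix s assume "s \<in> idx m"
    then have "{i. s i} \<in> Pow {1..m}" unfolding idx_def by auto
    moreover have "s = (\<lambda>i. i \<in> {i. s i})" by simp
    ultimately show "s \<in> (\<lambda>S i. i \<in> S) ` Pow {1..m}" by blast
  qed
  then show ?thesis by (rule finite_subset) simp
qed

lemma lin_tensors: "(\<And>k. k \<le> m \<Longrightarrow> phi k \<in> tensors m) \<Longrightarrow> lin m phi c \<in> tensors m"
  unfolding tensors_def lin_def by simp

lemma lin_scale: "lin m phi (\<lambda>k. t * c k) = (\<lambda>s. t * lin m phi c s)"
  unfolding lin_def by (simp add: sum_distrib_left algebra_simps)

text \<open>Rows are indexed by an enumeration ss of the multi-indices idx m, column k holds phi k; for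
  v = (x, y) the pencil x A_False + y A_True contracts slot j of each phi k with v.\<close>

definition slot_matrix ::
    "nat \<Rightarrow> (nat \<Rightarrow> (nat \<Rightarrow> bool) \<Rightarrow> 'a) \<Rightarrow> (nat \<Rightarrow> bool) list \<Rightarrow> nat \<Rightarrow> bool \<Rightarrow> 'a mat" where
  "slot_matrix m phi ss j b = mat (length ss) (Suc m) (\<lambda>(r, k). phi k ((ss ! r)(j := b)))"

lemma slot_matrix_carrier [simp]: "slot_matrix m phi ss j b \<in> carrier_mat (length ss) (Suc m)"
  unfolding slot_matrix_def by simp

abbreviation slot_pencil ::
    "nat \<Rightarrow> (nat \<Rightarrow> (nat \<Rightarrow> bool) \<Rightarrow> 'a::comm_ring_1) \<Rightarrow> (nat \<Rightarrow> bool) list \<Rightarrow> nat \<Rightarrow>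
      'a \<times> 'a \<Rightarrow> 'a mat" where
  "slot_pencil m phi ss j \<equiv> pencil (slot_matrix m phi ss j False) (slot_matrix m phi ss j True)"

lemma slot_pencil_mult_vec:
  assumes "x \<in> carrier_vec (Suc m)" "r < length ss"
  shows "(slot_pencil m phi ss j v *\<^sub>v x) $ r =
    fst v * lin m phi (coeffs_of_vec (Suc m) x) ((ss ! r)(j := False)) +
    snd v * lin m phi (coeffs_of_vec (Suc m) x) ((ss ! r)(j := True))"
proof -
  let ?sF = "(ss ! r)(j := False)" and ?sT = "(ss ! r)(j := True)"
  have "(slot_pencil m phi ss j v *\<^sub>v x) $ r =
      (\<Sum>k\<le>m. (fst v * phi k ?sF + snd v * phi k ?sT) * x $ k)"
    using assms by (simp add: pencil_def slot_matrix_def scalar_prod_def atLeast0LessThan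
        lessThan_Suc_atMost)
  also have "\<dots> = fst v * (\<Sum>k\<le>m. x $ k * phi k ?sF) + snd v * (\<Sum>k\<le>m. x $ k * phi k ?sT)"
    by (simp add: sum_distrib_left sum.distrib algebra_simps)
  finally show ?thesis by (simp add: lin_def coeffs_of_vec_def)
qed

lemma mat_kernel_slot_pencil_iff:
  assumes phi: "\<And>k. k \<le> m \<Longrightarrow> phi k \<in> tensors m" and ss: "set ss = idx m"
  shows "x \<in> mat_kernel (slot_pencil m phi ss j v) \<longleftrightarrow>
    x \<in> carrier_vec (Suc m) \<and> lin m phi (coeffs_of_vec (Suc m) x) \<in> Sigma0 m j v"
proof (cases "x \<in> carrier_vec (Suc m)")
  case x: True
  have "x \<in> mat_kernel (slot_pencil m phi ss j v) \<longleftrightarrow>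
      (\<forall>r<length ss. (slot_pencil m phi ss j v *\<^sub>v x) $ r = 0)"
    using x by (auto simp: mat_kernel_def vec_eq_iff slot_matrix_def)
  also have "\<dots> \<longleftrightarrow> (\<forall>s\<in>idx m.
      fst v * lin m phi (coeffs_of_vec (Suc m) x) (s(j := False)) +
      snd v * lin m phi (coeffs_of_vec (Suc m) x) (s(j := True)) = 0)"
    unfolding ss[symmetric] all_set_conv_all_nth using slot_pencil_mult_vec[OF x] by simp
  also have "\<dots> \<longleftrightarrow> lin m phi (coeffs_of_vec (Suc m) x) \<in> Sigma0 m j v"
    using lin_tensors[OF phi] by (simp add: Sigma0_def)
  finally show ?thesis using x by simp
qed (auto simp: mat_kernel_def slot_matrix_def)

lemma preimage_Sigma0_eq_kernel:
  assumes phi: "\<And>k. k \<le> m \<Longrightarrow> phi k \<in> tensors m" and ss: "set ss = idx m"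
  shows "{c \<in> hspace m. lin m phi c \<in> Sigma0 m j v} =
    coeffs_of_vec (Suc m) ` mat_kernel (slot_pencil m phi ss j v)"
proof -
  note kernel = mat_kernel_slot_pencil_iff[OF phi ss]
  show ?thesis
  proof (rule Set.set_eqI, rule iffI)
    fix c assume c: "c \<in> {c \<in> hspace m. lin m phi c \<in> Sigma0 m j v}"
    then have "c = coeffs_of_vec (Suc m) (vec (Suc m) c)"
      by (auto simp: hspace_def coeffs_of_vec_vec fun_eq_iff)
    moreover have "vec (Suc m) c \<in> mat_kernel (slot_pencil m phi ss j v)"
      using c calculation kernel by auto
    ultimately show "c \<in> coeffs_of_vec (Suc m) ` mat_kernel (slot_pencil m phi ss j v)" by blast
  next
    fix c assume "c \<in> coeffs_of_vec (Suc m) ` mat_kernel (slot_pencil m phi ss j v)"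
    then obtain x where "x \<in> mat_kernel (slot_pencil m phi ss j v)" "c = coeffs_of_vec (Suc m) x"
      by blast
    then show "c \<in> {c \<in> hspace m. lin m phi c \<in> Sigma0 m j v}"
      using kernel by (auto simp: hspace_def coeffs_of_vec_def)
  qed
qed

lemma one_dim_preimage:
  assumes inj: "inj_on (lin m phi) (hspace m)" and one: "one_dim (image_phi m phi \<inter> S)"
  shows "\<exists>c\<in>hspace m. c \<noteq> (\<lambda>_. 0) \<and> {c \<in> hspace m. lin m phi c \<in> S} = {(\<lambda>k. t * c k) | t. True}"
proof -
  obtain T where T: "T \<noteq> (\<lambda>_. 0)" "image_phi m phi \<inter> S = {(\<lambda>s. t * T s) | t. True}"
    using one unfolding one_dim_def by blast
  then have "T \<in> image_phi m phi \<inter> S" by force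
  then obtain c where c: "c \<in> hspace m" "lin m phi c = T" "T \<in> S" unfolding image_phi_def by blast
  have lin_line: "lin m phi c' \<in> S \<longleftrightarrow> (\<exists>t. lin m phi c' = lin m phi (\<lambda>k. t * c k))"
    if "c' \<in> hspace m" for c'
    using T(2) that c(2) unfolding image_phi_def by (auto simp: lin_scale)
  have scaled: "(\<lambda>k. t * c k) \<in> hspace m" for t using c(1) unfolding hspace_def by simp
  have "{c' \<in> hspace m. lin m phi c' \<in> S} = {(\<lambda>k. t * c k) | t. True}"
    using lin_line scaled inj_onD[OF inj] by blast
  moreover have "c \<noteq> (\<lambda>_. 0)" using T(1) c(2) unfolding lin_def by auto
  ultimately show ?thesis using c(1) by blast
qed

lemma goodU_kernel_line:
  assumes fs: "factorization_structure m phi" and ss: "set ss = idx m"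
    and v: "v \<in> goodU m phi j"
  shows "\<exists>c. c \<noteq> 0\<^sub>v (Suc m) \<and> mat_kernel (slot_pencil m phi ss j v) = vec_line c"
proof -
  have phi: "\<And>k. k \<le> m \<Longrightarrow> phi k \<in> tensors m" and inj: "inj_on (lin m phi) (hspace m)"
    using fs unfolding factorization_structure_def by auto
  obtain c where c: "c \<in> hspace m" "c \<noteq> (\<lambda>_. 0)"
    and pre: "{c \<in> hspace m. lin m phi c \<in> Sigma0 m j v} = {(\<lambda>k. t * c k) | t. True}"
    using one_dim_preimage[OF inj] v unfolding goodU_def by blast
  define x where "x = vec (Suc m) c"
  have x: "x \<in> carrier_vec (Suc m)" "coeffs_of_vec (Suc m) x = c"
    using c(1) by (auto simp: x_def coeffs_of_vec_vec hspace_def fun_eq_iff)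
  have "coeffs_of_vec (Suc m) ` mat_kernel (slot_pencil m phi ss j v) = coeffs_of_vec (Suc m) ` vec_line x"
    using pre preimage_Sigma0_eq_kernel[OF phi ss] coeffs_of_vec_image_vec_line[OF x(1)] x(2) by simp
  moreover have "mat_kernel (slot_pencil m phi ss j v) \<subseteq> carrier_vec (Suc m)"
    by (rule mat_kernel_carrier[OF pencil_carrier[OF slot_matrix_carrier slot_matrix_carrier]])
  moreover have "vec_line x \<subseteq> carrier_vec (Suc m)" using x(1) unfolding vec_line_def by auto
  ultimately have "mat_kernel (slot_pencil m phi ss j v) = vec_line x"
    using inj_on_image_eq_iff[OF coeffs_of_vec_inj] by blast
  moreover have "x \<noteq> 0\<^sub>v (Suc m)"
  proof
    assume "x = 0\<^sub>v (Suc m)"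
    with x(2) have "c = (\<lambda>_. 0)" by (auto simp: coeffs_of_vec_def)
    with c(2) show False by simp
  qed
  ultimately show ?thesis by blast
qed

lemma preimage_Sigma0_polynomial_line:
  fixes phi :: "nat \<Rightarrow> (nat \<Rightarrow> bool) \<Rightarrow> 'a::field"
  assumes fs: "factorization_structure m phi" and v\<^sub>0: "v\<^sub>0 \<in> goodU m phi j"
  obtains G :: "nat \<Rightarrow> nat \<Rightarrow> 'a" where "\<exists>k\<le>m. hpoly m (G k) v\<^sub>0 \<noteq> 0"
    "\<And>v. v \<in> goodU m phi j \<Longrightarrow> \<exists>k\<le>m. hpoly m (G k) v \<noteq> 0 \<Longrightarrow>
      {c \<in> hspace m. lin m phi c \<in> Sigma0 m j v} =
      {(\<lambda>k. t * (if k \<le> m then hpoly m (G k) v else 0)) | t. True}"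
proof -
  obtain ss where ss: "set ss = idx m" using finite_list[OF finite_idx] by blast
  have phi: "\<And>k. k \<le> m \<Longrightarrow> phi k \<in> tensors m"
    using fs unfolding factorization_structure_def by blast
  obtain c\<^sub>0 where c\<^sub>0: "c\<^sub>0 \<noteq> 0\<^sub>v (Suc m)" "mat_kernel (slot_pencil m phi ss j v\<^sub>0) = vec_line c\<^sub>0"
    using goodU_kernel_line[OF fs ss v\<^sub>0] by blast
  obtain F where F_hom: "\<And>k. k < Suc m \<Longrightarrow> homogeneous_poly m (F k)"
    and F_v\<^sub>0: "vec (Suc m) (\<lambda>k. F k v\<^sub>0) \<noteq> 0\<^sub>v (Suc m)"
    and F_ker: "\<And>v c. c \<noteq> 0\<^sub>v (Suc m) \<Longrightarrow> mat_kernel (slot_pencil m phi ss j v) = vec_line c \<Longrightarrow>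
      vec (Suc m) (\<lambda>k. F k v) \<noteq> 0\<^sub>v (Suc m) \<Longrightarrow>
      mat_kernel (slot_pencil m phi ss j v) = vec_line (vec (Suc m) (\<lambda>k. F k v))"
    using pencil_kernel_line_polynomial[OF slot_matrix_carrier slot_matrix_carrier c\<^sub>0] by blast
  obtain G where G: "\<And>k. k \<le> m \<Longrightarrow> F k = hpoly m (G k)"
    using F_hom unfolding homogeneous_poly_def less_Suc_eq_le by metis
  have F_nonzero: "vec (Suc m) (\<lambda>k. F k v) \<noteq> 0\<^sub>v (Suc m) \<longleftrightarrow> (\<exists>k\<le>m. hpoly m (G k) v \<noteq> 0)" for v
    by (auto simp: vec_eq_iff G less_Suc_eq_le)
  have coeffs_F: "coeffs_of_vec (Suc m) (vec (Suc m) (\<lambda>k. F k v)) =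
      (\<lambda>k. if k \<le> m then hpoly m (G k) v else 0)" for v
    by (auto simp: coeffs_of_vec_vec G less_Suc_eq_le)
  show thesis
  proof
    show "\<exists>k\<le>m. hpoly m (G k) v\<^sub>0 \<noteq> 0" using F_v\<^sub>0 F_nonzero by blast
  next
    fix v assume v: "v \<in> goodU m phi j" "\<exists>k\<le>m. hpoly m (G k) v \<noteq> 0"
    obtain c where "c \<noteq> 0\<^sub>v (Suc m)" "mat_kernel (slot_pencil m phi ss j v) = vec_line c"
      using goodU_kernel_line[OF fs ss v(1)] by blast
    then have "mat_kernel (slot_pencil m phi ss j v) = vec_line (vec (Suc m) (\<lambda>k. F k v))"
      by (rule F_ker) (use F_nonzero[of v] v(2) in simp)
    then have "{c \<in> hspace m. lin m phi c \<in> Sigma0 m j v} =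
        coeffs_of_vec (Suc m) ` vec_line (vec (Suc m) (\<lambda>k. F k v))"
      using preimage_Sigma0_eq_kernel[OF phi ss] by simp
    also have "\<dots> = {(\<lambda>k. t * (if k \<le> m then hpoly m (G k) v else 0)) | t. True}"
      by (simp add: coeffs_of_vec_image_vec_line coeffs_F)
    finally show "{c \<in> hspace m. lin m phi c \<in> Sigma0 m j v} =
        {(\<lambda>k. t * (if k \<le> m then hpoly m (G k) v else 0)) | t. True}" .
  qed
qed

theorem proposition2p1:
  fixes m j :: nat and phi :: "nat \<Rightarrow> (nat \<Rightarrow> bool) \<Rightarrow> 'a::real_normed_field"
  assumes "factorization_structure m phi"
    and "j \<in> {1..m}"
  shows "\<exists>W. zariski_open_P1 W \<and> W \<noteq> {} \<and> W \<subseteq> goodU m phi j \<and>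
           (\<exists>d\<le>m. \<exists>F :: nat \<Rightarrow> nat \<Rightarrow> 'a. \<forall>v\<in>W.
              {c \<in> hspace m. lin m phi c \<in> Sigma0 m j v}
                = {(\<lambda>k. t * (if k \<le> m then hpoly d (F k) v else 0)) | t. True}
              \<and> (\<lambda>k. if k \<le> m then hpoly d (F k) v else 0) \<noteq> (\<lambda>_. 0))"
proof -
  obtain W\<^sub>0 where W\<^sub>0: "zariski_open_P1 W\<^sub>0" "W\<^sub>0 \<noteq> {}" "W\<^sub>0 \<subseteq> goodU m phi j"
    using assms unfolding factorization_structure_def by blast
  then obtain v\<^sub>0 where v\<^sub>0: "v\<^sub>0 \<in> W\<^sub>0" by blast
  obtain G where G_v\<^sub>0: "\<exists>k\<le>m. hpoly m (G k) v\<^sub>0 \<noteq> 0"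
    and G: "\<And>v. v \<in> goodU m phi j \<Longrightarrow> \<exists>k\<le>m. hpoly m (G k) v \<noteq> 0 \<Longrightarrow>
      {c \<in> hspace m. lin m phi c \<in> Sigma0 m j v} =
      {(\<lambda>k. t * (if k \<le> m then hpoly m (G k) v else 0)) | t. True}"
    using preimage_Sigma0_polynomial_line[OF assms(1)] v\<^sub>0 W\<^sub>0(3) by blast
  define W where "W = W\<^sub>0 \<inter> {v. v \<noteq> (0, 0) \<and> (\<exists>k\<in>{..m}. hpoly m (G k) v \<noteq> 0)}"
  have "zariski_open_P1 W"
    unfolding W_def by (rule zariski_open_P1_Int[OF W\<^sub>0(1) zariski_open_P1_nonvanishing])
  moreover have "v\<^sub>0 \<in> W" using v\<^sub>0 W\<^sub>0(3) G_v\<^sub>0 unfolding W_def goodU_def by auto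
  moreover have "W \<subseteq> goodU m phi j" using W\<^sub>0(3) unfolding W_def by blast
  moreover have "(\<lambda>k. if k \<le> m then hpoly m (G k) v else 0) \<noteq> (\<lambda>_. 0)" if "v \<in> W" for v
  proof
    assume "(\<lambda>k. if k \<le> m then hpoly m (G k) v else 0) = (\<lambda>_. 0)"
    then have "\<forall>k\<le>m. hpoly m (G k) v = 0" by metis
    with that show False unfolding W_def by auto
  qed
  moreover have "\<forall>v\<in>W. {c \<in> hspace m. lin m phi c \<in> Sigma0 m j v} =
      {(\<lambda>k. t * (if k \<le> m then hpoly m (G k) v else 0)) | t. True}"
    using G W\<^sub>0(3) unfolding W_def by auto
  ultimately show ?thesis by (intro exI[of _ W] exI[of _ m] exI[of _ G] conjI le_refl) auto
qed

end
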